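(* Let $h>0$, let $\phi_h(x)=\frac{1}{\sqrt{2\pi h}}e^{-x^2/(2h)}$ for $x\in\mathbb{R}$, and for an integer $C$ let $\tilde\phi_h(x)=\sum_{j\in\mathbb{Z}}\phi_h(x+2\pi j)$ and $\tilde\phi_h^{(C)}(x)=\sum_{|j|\le C}\phi_h(x+2\pi j)$. For points $x_1,\dots,x_n\in[-\pi,\pi]$ and the empirical measure $\nu=\frac1n\sum_{i=1}^n\delta_{x_i}$, set $(\tilde\phi_h*\nu)(x)=\frac1n\sum_{i=1}^n\tilde\phi_h(x-x_i)$ and $(\tilde\phi_h^{(C)}*\nu)(x)=\frac1n\sum_{i=1}^n\tilde\phi_h^{(C)}(x-x_i)$ for $x\in[-\pi,\pi]$. If $2\pi(C-1)\ge\sqrt h$, then $$\sup_{x\in[-\pi,\pi]}\Big|\frac{\partial(\tilde\phi_h*\nu)}{\partial x}(x)-\frac{\partial(\tilde\phi_h^{(C)}*\nu)}{\partial x}(x)\Big|\le\frac1\pi\,\phi_h\big(2\pi(C-1)\big).$$ *)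

theory Defs
  imports "HOL-Analysis.Analysis"
begin

definition gauss :: "real \<Rightarrow> real \<Rightarrow> real" where
  "gauss h x = exp (- (x^2) / (2*h)) / sqrt (2*pi*h)"

definition wrapped_gauss :: "real \<Rightarrow> real \<Rightarrow> real" where
  "wrapped_gauss h x = (\<Sum>\<^sub>\<infinity>j::int. gauss h (x + 2 * pi * real_of_int j))"

definition wrapped_gauss_trunc :: "real \<Rightarrow> int \<Rightarrow> real \<Rightarrow> real" where
  "wrapped_gauss_trunc h C x = (\<Sum>j\<in>{-C..C}. gauss h (x + 2 * pi * real_of_int j))"

end

theory Submission
  imports Defs
begin

text \<open>For arguments in \<open>[-2\<pi>, 2\<pi>]\<close> the wrapped and the truncated sum differ by the Gaussians
  with \<open>|j| > C\<close>. Their derivatives therefore differ by two one-sided tails of the slope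
  \<open>t/h \<cdot> \<phi>\<^sub>h(t) = -\<phi>\<^sub>h'(t)\<close>, taken at points \<open>t \<ge> 2\<pi>C\<close>, with opposite signs.
  Beyond the inflection point \<open>\<surd>h\<close> the slope decreases, so by the mean value theorem
  \<open>2\<pi>\<close> times the slope at \<open>t\<close> is at most \<open>\<phi>\<^sub>h(t - 2\<pi>) - \<phi>\<^sub>h(t)\<close>; summing telescopes, and each
  (nonnegative) tail is at most \<open>\<phi>\<^sub>h(2\<pi>(C - 1))/(2\<pi>)\<close>, hence so is their difference. The same
  bounds give the Weierstrass M-test that justifies differentiating the tails term by term.\<close>

definition gauss_slope :: "real \<Rightarrow> real \<Rightarrow> real" where
  "gauss_slope h t = t / h * gauss h t"

lemma gauss_minus [simp]: "gauss h (- t) = gauss h t"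
  by (simp add: gauss_def)

lemma gauss_pos: "h > 0 \<Longrightarrow> gauss h t > 0"
  by (simp add: gauss_def)

lemma gauss_antimono:
  assumes "h > 0" "0 \<le> s" "s \<le> t"
  shows "gauss h t \<le> gauss h s"
proof -
  have "s^2 \<le> t^2" using assms by (intro power_mono) auto
  with assms show ?thesis
    unfolding gauss_def by (intro divide_right_mono) (auto simp: divide_right_mono)
qed

lemma has_real_derivative_gauss:
  "h > 0 \<Longrightarrow> (gauss h has_real_derivative - gauss_slope h t) (at t)"
  unfolding gauss_slope_def gauss_def
  by (auto intro!: derivative_eq_intros simp: field_simps power2_eq_square)

lemma has_real_derivative_gauss_slope:
  assumes "h > 0"
  shows "(gauss_slope h has_real_derivative gauss h t / h * (1 - t^2 / h)) (at t)"
proof -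
  have "gauss_slope h = (\<lambda>t. t / h * gauss h t)"
    by (simp add: gauss_slope_def fun_eq_iff)
  moreover have "((\<lambda>t. t / h * gauss h t) has_real_derivative gauss h t / h * (1 - t^2 / h)) (at t)"
    using assms by (auto intro!: derivative_eq_intros has_real_derivative_gauss
        simp: gauss_slope_def field_simps power2_eq_square)
  ultimately show ?thesis by simp
qed

lemma gauss_slope_nonneg: "h > 0 \<Longrightarrow> 0 \<le> t \<Longrightarrow> 0 \<le> gauss_slope h t"
  using gauss_pos[of h t] by (simp add: gauss_slope_def)

lemma gauss_slope_antimono:
  assumes h: "h > 0" and "sqrt h \<le> s" "s \<le> t"
  shows "gauss_slope h t \<le> gauss_slope h s"
proof (rule DERIV_nonpos_imp_nonincreasing[OF \<open>s \<le> t\<close>])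
  fix x assume "s \<le> x"
  with assms have "(sqrt h)^2 \<le> x^2" by (intro power_mono) auto
  with h have "1 - x^2 / h \<le> 0" by (simp add: field_simps)
  moreover have "0 \<le> gauss h x / h" using gauss_pos[OF h, of x] h by simp
  ultimately have "gauss h x / h * (1 - x^2 / h) \<le> 0" by (rule mult_nonneg_nonpos[rotated])
  with has_real_derivative_gauss_slope[OF h]
  show "\<exists>y. (gauss_slope h has_real_derivative y) (at x) \<and> y \<le> 0" by blast
qed

lemma gauss_le_gauss_slope:
  assumes h: "h > 0" and "sqrt h \<le> t"
  shows "gauss h t \<le> sqrt h * gauss_slope h t"
proof -
  have "sqrt h * sqrt h \<le> sqrt h * t" using assms by (intro mult_left_mono) auto
  with h have "1 \<le> sqrt h * t / h" by simp
  hence "1 * gauss h t \<le> (sqrt h * t / h) * gauss h t"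
    using gauss_pos[OF h, of t] by (intro mult_right_mono) auto
  thus ?thesis by (simp add: gauss_slope_def)
qed

lemma gauss_slope_le_gauss_decrement:
  assumes h: "h > 0" and "d > 0" and t: "sqrt h + d \<le> t"
  shows "d * gauss_slope h t \<le> gauss h (t - d) - gauss h t"
proof -
  obtain z where z: "t - d < z" "z < t"
    and mvt: "gauss h t - gauss h (t - d) = (t - (t - d)) * - gauss_slope h z"
    using MVT2[of "t - d" t "gauss h" "\<lambda>x. - gauss_slope h x"] \<open>d > 0\<close>
      has_real_derivative_gauss[OF h] by auto
  have "gauss_slope h t \<le> gauss_slope h z"
    using z t by (intro gauss_slope_antimono[OF h]) auto
  hence "d * gauss_slope h t \<le> d * gauss_slope h z"
    using \<open>d > 0\<close> by simp
  with mvt show ?thesis by (simp add: algebra_simps)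
qed

lemma sum_gauss_slope_progression_le:
  assumes h: "h > 0" and "d > 0" and a: "sqrt h + d \<le> a"
  shows "(\<Sum>k<N. gauss_slope h (a + d * real k)) \<le> gauss h (a - d) / d"
proof -
  define g where "g k = gauss h (a - d + d * real k)" for k
  have "(\<Sum>k<N. d * gauss_slope h (a + d * real k)) \<le> (\<Sum>k<N. g k - g (Suc k))"
  proof (rule sum_mono)
    fix k
    have "sqrt h + d \<le> a + d * real k" using a \<open>d > 0\<close> by (simp add: add_increasing2)
    from gauss_slope_le_gauss_decrement[OF h \<open>d > 0\<close> this]
    show "d * gauss_slope h (a + d * real k) \<le> g k - g (Suc k)"
      by (simp add: g_def algebra_simps)
  qed
  also have "\<dots> = g 0 - g N" by (rule sum_lessThan_telescope')
  also have "\<dots> \<le> g 0" using gauss_pos[OF h] by (simp add: g_def less_imp_le)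
  finally show ?thesis
    using \<open>d > 0\<close> by (simp add: g_def field_simps sum_distrib_left)
qed

lemma summable_gauss_slope_progression:
  assumes h: "h > 0" and "d > 0" and a: "sqrt h \<le> a"
  shows "summable (\<lambda>k. gauss_slope h (a + d * real k))"
proof -
  have "summable (\<lambda>k. gauss_slope h ((a + d) + d * real k))"
  proof (rule bounded_imp_summable)
    show "0 \<le> gauss_slope h ((a + d) + d * real k)" for k
    proof (rule gauss_slope_nonneg[OF h])
      have "0 \<le> a" using a real_sqrt_ge_zero[of h] h by linarith
      with \<open>d > 0\<close> show "0 \<le> (a + d) + d * real k" by simp
    qed
    show "(\<Sum>k\<le>N. gauss_slope h ((a + d) + d * real k)) \<le> gauss h a / d" for N
      using sum_gauss_slope_progression_le[OF h \<open>d > 0\<close>, of "a + d" "Suc N"] a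
      by (simp add: lessThan_Suc_atMost)
  qed
  thus ?thesis by (subst summable_Suc_iff[symmetric]) (simp add: algebra_simps)
qed

lemma suminf_gauss_slope_progression_le:
  assumes h: "h > 0" and "d > 0" and a: "sqrt h + d \<le> a"
  shows "(\<Sum>k. gauss_slope h (a + d * real k)) \<le> gauss h (a - d) / d"
  using assms by (intro suminf_le_const summable_gauss_slope_progression sum_gauss_slope_progression_le)
    (auto intro: order.trans[OF _ a])

lemma summable_gauss_progression:
  assumes h: "h > 0" and "d > 0" and a: "sqrt h \<le> a"
  shows "summable (\<lambda>k. gauss h (a + d * real k))"
proof (rule summable_comparison_test'[OF summable_mult[OF summable_gauss_slope_progression[OF assms]]])
  fix k
  have "gauss h (a + d * real k) \<le> sqrt h * gauss_slope h (a + d * real k)"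
    using a \<open>d > 0\<close> by (intro gauss_le_gauss_slope[OF h]) (auto intro: order.trans[OF a])
  thus "norm (gauss h (a + d * real k)) \<le> sqrt h * gauss_slope h (a + d * real k)"
    using gauss_pos[OF h] by (simp add: less_imp_le)
qed

lemma has_sum_int_from:
  fixes f :: "int \<Rightarrow> real"
  assumes "(\<lambda>n. f (k + int n)) sums a" and "\<And>j. k \<le> j \<Longrightarrow> 0 \<le> f j"
  shows "(f has_sum a) {k..}"
proof -
  have "((\<lambda>n. f (k + int n)) has_sum a) UNIV"
    using assms by (intro sums_nonneg_imp_has_sum) auto
  thus ?thesis
    by (subst has_sum_reindex_bij_witness[where i = "\<lambda>n. k + int n" and j = "\<lambda>j. nat (j - k)"
          and T = UNIV]) auto
qed

lemma has_sum_int_split: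
  fixes f :: "int \<Rightarrow> real"
  assumes "0 \<le> C" and "\<And>j. 0 \<le> f j"
    and "(\<lambda>n. f (C + 1 + int n)) sums a" and "(\<lambda>n. f (- C - 1 - int n)) sums b"
  shows "(f has_sum ((\<Sum>j\<in>{-C..C}. f j) + a + b)) UNIV"
proof -
  have up: "(f has_sum a) {C+1..}"
    using assms(2,3) by (intro has_sum_int_from) (simp_all add: add.assoc)
  have "((\<lambda>j. f (- j)) has_sum b) {C+1..}"
    using assms(2,4) by (intro has_sum_int_from) (simp_all add: algebra_simps)
  hence down: "(f has_sum b) {..-C-1}"
    by (subst has_sum_reindex_bij_witness[where i = uminus and j = uminus and T = "{C+1..}"]) auto
  have "(f has_sum ((\<Sum>j\<in>{-C..C}. f j) + a + b)) ({-C..C} \<union> {C+1..} \<union> {..-C-1})"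
    using assms(1) by (intro has_sum_Un_disjoint has_sum_finite up down) auto
  moreover have "{-C..C} \<union> {C+1..} \<union> {..-C-1} = UNIV" by auto
  ultimately show ?thesis by simp
qed

text \<open>The terms \<open>j = C + 1 + n\<close> of the wrapped sum; by evenness of the Gaussian the terms
  \<open>j = -C - 1 - n\<close> form \<open>gauss_tail h C (- z)\<close>.\<close>

definition gauss_tail :: "real \<Rightarrow> int \<Rightarrow> real \<Rightarrow> real" where
  "gauss_tail h C z = (\<Sum>n. gauss h (z + 2*pi*(of_int C + 1) + 2*pi*real n))"

definition gauss_slope_tail :: "real \<Rightarrow> int \<Rightarrow> real \<Rightarrow> real" where
  "gauss_slope_tail h C z = (\<Sum>n. gauss_slope h (z + 2*pi*(of_int C + 1) + 2*pi*real n))"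

lemma wrapped_gauss_split:
  assumes h: "h > 0" and "0 \<le> C" and z: "sqrt h \<le> 2*pi*(of_int C + 1) - \<bar>z\<bar>"
  shows "wrapped_gauss h z = wrapped_gauss_trunc h C z + gauss_tail h C z + gauss_tail h C (- z)"
proof -
  define f where "f j = gauss h (z + 2*pi*real_of_int j)" for j
  have tail_sums: "(\<lambda>n. gauss h (w + 2*pi*(of_int C + 1) + 2*pi*real n)) sums gauss_tail h C w"
    if "\<bar>w\<bar> = \<bar>z\<bar>" for w
    unfolding gauss_tail_def using z that
    by (intro summable_sums summable_gauss_progression[OF h]) auto
  have "(\<lambda>n. f (C + 1 + int n)) = (\<lambda>n. gauss h (z + 2*pi*(of_int C + 1) + 2*pi*real n))"
    by (simp add: f_def algebra_simps)
  moreover have "(\<lambda>n. f (- C - 1 - int n)) = (\<lambda>n. gauss h (- z + 2*pi*(of_int C + 1) + 2*pi*real n))"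
  proof
    fix n
    have "f (- C - 1 - int n) = gauss h (- (- z + 2*pi*(of_int C + 1) + 2*pi*real n))"
      by (simp add: f_def algebra_simps)
    thus "f (- C - 1 - int n) = gauss h (- z + 2*pi*(of_int C + 1) + 2*pi*real n)"
      by (simp only: gauss_minus)
  qed
  ultimately have "(\<lambda>n. f (C + 1 + int n)) sums gauss_tail h C z"
    and "(\<lambda>n. f (- C - 1 - int n)) sums gauss_tail h C (- z)"
    using tail_sums[of z] tail_sums[of "- z"] by simp_all
  with \<open>0 \<le> C\<close> have "(f has_sum (wrapped_gauss_trunc h C z + gauss_tail h C z + gauss_tail h C (- z))) UNIV"
    unfolding wrapped_gauss_trunc_def f_def
    by (intro has_sum_int_split) (auto simp: f_def intro: less_imp_le[OF gauss_pos[OF h]])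
  thus ?thesis unfolding wrapped_gauss_def f_def by (rule infsumI)
qed

lemma has_real_derivative_gauss_tail:
  assumes h: "h > 0" and r: "sqrt h \<le> 2*pi*(of_int C + 1) - r" and z: "\<bar>z\<bar> < r"
  shows "(gauss_tail h C has_real_derivative - gauss_slope_tail h C z) (at z)"
proof -
  define a where "a = 2*pi*(of_int C + 1)"
  define S where "S = {-r<..<r}"
  have zS: "z \<in> S" and "z \<in> interior S" using z by (auto simp: S_def abs_less_iff)
  have uniform: "uniformly_convergent_on S (\<lambda>N x. \<Sum>n<N. - gauss_slope h (x + a + 2*pi*real n))"
  proof (rule Weierstrass_m_test')
    show "summable (\<lambda>n. gauss_slope h ((a - r) + 2*pi*real n))"
      using r by (intro summable_gauss_slope_progression[OF h]) (simp_all add: a_def)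
  next
    fix n x assume "x \<in> S"
    hence le: "sqrt h \<le> (a - r) + 2*pi*real n" "(a - r) + 2*pi*real n \<le> x + a + 2*pi*real n"
      using r by (auto simp: S_def a_def add_increasing2)
    hence "0 \<le> gauss_slope h (x + a + 2*pi*real n)"
      by (intro gauss_slope_nonneg[OF h]) (meson order.trans real_sqrt_ge_zero less_imp_le[OF h])
    with le show "norm (- gauss_slope h (x + a + 2*pi*real n)) \<le> gauss_slope h ((a - r) + 2*pi*real n)"
      by (simp add: gauss_slope_antimono[OF h])
  qed
  have summable_at_z: "summable (\<lambda>n. gauss h (z + a + 2*pi*real n))"
    using r z by (intro summable_gauss_progression[OF h]) (auto simp: a_def)
  have "((\<lambda>x. \<Sum>n. gauss h (x + a + 2*pi*real n)) has_real_derivative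
      (\<Sum>n. - gauss_slope h (z + a + 2*pi*real n))) (at z)"
  proof (rule has_field_derivative_series'(2)[where f = "\<lambda>n x. gauss h (x + a + 2*pi*real n)",
        OF _ _ uniform zS summable_at_z \<open>z \<in> interior S\<close>])
    fix n x
    have "((\<lambda>x. gauss h (x + a + 2*pi*real n)) has_real_derivative
        - gauss_slope h (x + a + 2*pi*real n) * 1) (at x)"
      by (rule DERIV_chain2[OF has_real_derivative_gauss[OF h]]) (auto intro!: derivative_eq_intros)
    thus "((\<lambda>x. gauss h (x + a + 2*pi*real n)) has_real_derivative
        - gauss_slope h (x + a + 2*pi*real n)) (at x within S)"
      by (simp add: has_field_derivative_at_within)
  qed (simp_all add: S_def)
  moreover have "summable (\<lambda>n. gauss_slope h (z + a + 2*pi*real n))"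
    using r z by (intro summable_gauss_slope_progression[OF h]) (auto simp: a_def)
  ultimately show ?thesis
    unfolding gauss_tail_def[abs_def] gauss_slope_tail_def by (simp add: a_def suminf_minus)
qed

lemma gauss_slope_tail_nonneg:
  assumes h: "h > 0" and z: "sqrt h \<le> z + 2*pi*(of_int C + 1)"
  shows "0 \<le> gauss_slope_tail h C z"
  unfolding gauss_slope_tail_def
proof (rule suminf_nonneg)
  show "summable (\<lambda>n. gauss_slope h (z + 2*pi*(of_int C + 1) + 2*pi*real n))"
    using z by (intro summable_gauss_slope_progression[OF h]) auto
  have "0 \<le> z + 2*pi*(of_int C + 1)" using z real_sqrt_ge_zero[of h] h by linarith
  thus "0 \<le> gauss_slope h (z + 2*pi*(of_int C + 1) + 2*pi*real n)" for n
    by (intro gauss_slope_nonneg[OF h]) simp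
qed

lemma gauss_slope_tail_le:
  assumes h: "h > 0" and z: "sqrt h \<le> z + 2*pi * of_int C"
  shows "gauss_slope_tail h C z \<le> gauss h (z + 2*pi * of_int C) / (2*pi)"
  using suminf_gauss_slope_progression_le[OF h _, of "2*pi" "z + 2*pi*(of_int C + 1)"] z
  by (simp add: gauss_slope_tail_def algebra_simps)

lemma abs_gauss_slope_tail_diff_le:
  assumes h: "h > 0" and C: "sqrt h \<le> 2*pi*(of_int C - 1)" and z: "\<bar>z\<bar> \<le> 2*pi"
  shows "\<bar>gauss_slope_tail h C (- z) - gauss_slope_tail h C z\<bar> \<le> gauss h (2*pi*(of_int C - 1)) / (2*pi)"
proof -
  have bounds: "0 \<le> gauss_slope_tail h C w \<and> gauss_slope_tail h C w \<le> gauss h (2*pi*(of_int C - 1)) / (2*pi)"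
    if "\<bar>w\<bar> \<le> 2*pi" for w
  proof -
    have w: "2*pi*(of_int C - 1) \<le> w + 2*pi * of_int C" using that by (simp add: algebra_simps abs_le_iff)
    have "0 \<le> 2*pi*(of_int C - 1)" using C real_sqrt_ge_zero[of h] h by linarith
    hence "gauss h (w + 2*pi * of_int C) \<le> gauss h (2*pi*(of_int C - 1))"
      using w by (intro gauss_antimono[OF h])
    moreover have "gauss_slope_tail h C w \<le> gauss h (w + 2*pi * of_int C) / (2*pi)"
      using C w by (intro gauss_slope_tail_le[OF h]) linarith
    moreover have "0 \<le> gauss_slope_tail h C w"
    proof (rule gauss_slope_tail_nonneg[OF h])
      have "2*pi*(of_int C + 1) = 2*pi*(of_int C - 1) + 4*pi" by (simp add: algebra_simps)
      thus "sqrt h \<le> w + 2*pi*(of_int C + 1)" using C that by (simp add: abs_le_iff)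
    qed
    ultimately show ?thesis by (simp add: divide_right_mono order.trans)
  qed
  from bounds[of z] bounds[of "- z"] z show ?thesis by (simp add: abs_le_iff)
qed

lemma has_real_derivative_wrapped_gauss_trunc:
  assumes h: "h > 0"
  shows "(wrapped_gauss_trunc h C has_real_derivative
      - (\<Sum>j\<in>{-C..C}. gauss_slope h (z + 2*pi*real_of_int j))) (at z)"
proof -
  have "((\<lambda>z. \<Sum>j\<in>{-C..C}. gauss h (z + 2*pi*real_of_int j)) has_real_derivative
      (\<Sum>j\<in>{-C..C}. - gauss_slope h (z + 2*pi*real_of_int j) * 1)) (at z)"
    by (intro DERIV_sum DERIV_chain2[OF has_real_derivative_gauss[OF h]])
      (auto intro!: derivative_eq_intros)
  thus ?thesis unfolding wrapped_gauss_trunc_def[abs_def] by (simp add: sum_negf)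
qed

lemma has_real_derivative_wrapped_gauss:
  assumes h: "h > 0" and "0 \<le> C" and r: "sqrt h \<le> 2*pi*(of_int C + 1) - r" and z: "\<bar>z\<bar> < r"
    and trunc: "(wrapped_gauss_trunc h C has_real_derivative T) (at z)"
  shows "(wrapped_gauss h has_real_derivative
      T + gauss_slope_tail h C (- z) - gauss_slope_tail h C z) (at z)"
proof -
  have minus: "((\<lambda>y. - y) has_real_derivative - 1) (at z)"
    by (rule DERIV_minus[OF DERIV_ident])
  have split_deriv: "((\<lambda>y. wrapped_gauss_trunc h C y + gauss_tail h C y + gauss_tail h C (- y))
      has_real_derivative T + - gauss_slope_tail h C z + - gauss_slope_tail h C (- z) * - 1) (at z)"
  proof (rule DERIV_add[OF DERIV_add[OF trunc]])
    show "(gauss_tail h C has_real_derivative - gauss_slope_tail h C z) (at z)"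
      using z by (rule has_real_derivative_gauss_tail[OF h r])
    show "((\<lambda>y. gauss_tail h C (- y)) has_real_derivative - gauss_slope_tail h C (- z) * - 1) (at z)"
      using z by (intro DERIV_chain2[OF has_real_derivative_gauss_tail[OF h r] minus]) simp
  qed
  have split: "wrapped_gauss_trunc h C y + gauss_tail h C y + gauss_tail h C (- y) = wrapped_gauss h y"
    if "y \<in> {-r<..<r}" for y
  proof (rule wrapped_gauss_split[OF h \<open>0 \<le> C\<close>, symmetric])
    have "\<bar>y\<bar> < r" using that by (simp add: abs_less_iff)
    with r show "sqrt h \<le> 2*pi*(of_int C + 1) - \<bar>y\<bar>" by linarith
  qed
  have "z \<in> {-r<..<r}" using z by (simp add: abs_less_iff)
  from has_field_derivative_transform_within_open[OF split_deriv open_greaterThanLessThan this split]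
  show ?thesis by (simp add: algebra_simps)
qed

lemma deriv_average_shifts:
  fixes f :: "real \<Rightarrow> real"
  assumes "\<And>i. i < n \<Longrightarrow> (f has_real_derivative f' i) (at (x - xs i))"
  shows "deriv (\<lambda>y. (1 / real n) * (\<Sum>i<n. f (y - xs i))) x = (1 / real n) * (\<Sum>i<n. f' i)"
proof (rule DERIV_imp_deriv)
  show "((\<lambda>y. (1 / real n) * (\<Sum>i<n. f (y - xs i))) has_real_derivative
      (1 / real n) * (\<Sum>i<n. f' i)) (at x)"
  proof (rule DERIV_cmult, rule DERIV_sum)
    fix i assume "i \<in> {..<n}"
    have "((\<lambda>y. y - xs i) has_real_derivative 1) (at x)"
      using DERIV_diff[OF DERIV_ident DERIV_const] by simp
    from DERIV_chain2[OF assms this] \<open>i \<in> {..<n}\<close>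
    show "((\<lambda>y. f (y - xs i)) has_real_derivative f' i) (at x)" by simp
  qed
qed

lemma abs_deriv_average_wrapped_gauss_minus_trunc_le:
  fixes xs :: "nat \<Rightarrow> real"
  assumes h: "h > 0" and "n \<ge> 1" and C: "sqrt h \<le> 2*pi*(of_int C - 1)"
    and near: "\<And>i. i < n \<Longrightarrow> \<bar>x - xs i\<bar> \<le> 2*pi"
  shows "\<bar>deriv (\<lambda>y. (1 / real n) * (\<Sum>i<n. wrapped_gauss h (y - xs i))) x
      - deriv (\<lambda>y. (1 / real n) * (\<Sum>i<n. wrapped_gauss_trunc h C (y - xs i))) x\<bar>
    \<le> (1/pi) * gauss h (2*pi*(of_int C - 1))"
proof -
  define D where "D z = gauss_slope_tail h C (- z) - gauss_slope_tail h C z" for z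
  define T where "T z = - (\<Sum>j\<in>{-C..C}. gauss_slope h (z + 2*pi*real_of_int j))" for z
  define B where "B = gauss h (2*pi*(of_int C - 1)) / (2*pi)"
  have "0 \<le> 2*pi*(of_int C - 1)" using h C real_sqrt_ge_zero[of h] by linarith
  hence "0 \<le> C" using pi_gt_zero by (simp add: zero_le_mult_iff)
  have "2*pi*(of_int C + 1) - 3*pi = 2*pi*(of_int C - 1) + pi" by (simp add: algebra_simps)
  hence r: "sqrt h \<le> 2*pi*(of_int C + 1) - 3*pi" using C pi_gt_zero by linarith
  have trunc: "(wrapped_gauss_trunc h C has_real_derivative T z) (at z)" for z
    unfolding T_def by (rule has_real_derivative_wrapped_gauss_trunc[OF h])
  have "deriv (\<lambda>y. (1 / real n) * (\<Sum>i<n. wrapped_gauss h (y - xs i))) x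
      = (1 / real n) * (\<Sum>i<n. T (x - xs i) + D (x - xs i))"
    unfolding D_def add_diff_eq
  proof (rule deriv_average_shifts[OF has_real_derivative_wrapped_gauss[OF h \<open>0 \<le> C\<close> r _ trunc]])
    show "\<bar>x - xs i\<bar> < 3*pi" if "i < n" for i using near[OF that] pi_gt_zero by linarith
  qed
  moreover have "deriv (\<lambda>y. (1 / real n) * (\<Sum>i<n. wrapped_gauss_trunc h C (y - xs i))) x
      = (1 / real n) * (\<Sum>i<n. T (x - xs i))"
    by (rule deriv_average_shifts[OF trunc])
  ultimately have "deriv (\<lambda>y. (1 / real n) * (\<Sum>i<n. wrapped_gauss h (y - xs i))) x
      - deriv (\<lambda>y. (1 / real n) * (\<Sum>i<n. wrapped_gauss_trunc h C (y - xs i))) x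
      = (1 / real n) * (\<Sum>i<n. D (x - xs i))"
    by (simp add: sum.distrib algebra_simps)
  also have "\<bar>\<dots>\<bar> \<le> (1 / real n) * (\<Sum>i<n. \<bar>D (x - xs i)\<bar>)"
    by (simp add: abs_mult divide_right_mono)
  also have "\<dots> \<le> (1 / real n) * (\<Sum>i<n. B)"
    using near unfolding D_def B_def
    by (intro mult_left_mono sum_mono abs_gauss_slope_tail_diff_le[OF h C]) simp_all
  also have "\<dots> = B" using assms(2) by simp
  also have "\<dots> \<le> (1/pi) * gauss h (2*pi*(of_int C - 1))"
    using gauss_pos[OF h] by (simp add: B_def divide_left_mono less_imp_le)
  finally show ?thesis .
qed

theorem theorem10:
  fixes h :: real and C :: int and n :: nat and xs :: "nat \<Rightarrow> real"
  assumes "h > 0"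
    and "n \<ge> 1"
    and "\<And>i. i < n \<Longrightarrow> xs i \<in> {-pi..pi}"
    and "2*pi*(of_int C - 1) \<ge> sqrt h"
  shows "(SUP x\<in>{-pi..pi}.
            \<bar>deriv (\<lambda>y. (1 / real n) * (\<Sum>i<n. wrapped_gauss h (y - xs i))) x
             - deriv (\<lambda>y. (1 / real n) * (\<Sum>i<n. wrapped_gauss_trunc h C (y - xs i))) x\<bar>)
         \<le> (1/pi) * gauss h (2*pi*(of_int C - 1))"
proof -
  have near: "\<bar>x - xs i\<bar> \<le> 2*pi" if "x \<in> {-pi..pi}" and "i < n" for x i
    using that assms(3)[of i] by (auto simp: abs_le_iff)
  show ?thesis
    by (rule cSUP_least, simp) (rule abs_deriv_average_wrapped_gauss_minus_trunc_le[OF assms(1,2,4) near])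
qed
end
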